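(* Let $\mathcal{C}$ be a linear $[n,n-r]_q$ code with full-rank parity-check matrix $H\in\mathbb{F}_q^{r\times n}$, and let $b\ge 2$. (a) If every $z\in\mathbb{F}_q^r$ is a linear combination of $b$ cyclically consecutive columns of $H$ (i.e. $\mathcal{C}$ is $b$-burst-covering with bursts considered cyclically), then \[ n\ge \frac{q^{r-b+1}-1}{q-1}+1. \] (b) If every $z\in\mathbb{F}_q^r$ is a linear combination of columns $h_i,\dots,h_{i+b-1}$ of $H$ for some $0\le i\le n-b$ (bursts considered non-cyclically), then \[ n\ge \frac{q^{r-b+1}-1}{q-1}+b-1, \] with equality if and only if every non-zero vector of $\mathbb{F}_q^r$ occurs exactly once as a $b$-burst linear combination of columns of $H$, i.e. equals $Hc$ for exactly one non-zero $c\in\mathbb{F}_q^n$ whose support lies in $\{i,\dots,i+b-1\}$ for some $0\le i\le n-b$.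
   Context: $h_0,\dots,h_{n-1}$ denote the columns of $H$; in (a) column indices are taken modulo $n$. $\mathcal{C}=\ker H$. *)

theory Defs
  imports Complex_Main
begin

text \<open>Vectors of F_q^m are functions nat => 'a vanishing outside {0..<m};
an r x n matrix H is a function nat => nat => 'a, H i j the entry in row i, column j
(only i < r, j < n are relevant).\<close>

definition is_vec :: "nat \<Rightarrow> (nat \<Rightarrow> 'a::zero) \<Rightarrow> bool" where
  "is_vec m z \<longleftrightarrow> (\<forall>i\<ge>m. z i = 0)"

definition matvec :: "nat \<Rightarrow> nat \<Rightarrow> (nat \<Rightarrow> nat \<Rightarrow> 'a::comm_semiring_1) \<Rightarrow> (nat \<Rightarrow> 'a) \<Rightarrow> (nat \<Rightarrow> 'a)" where
  "matvec r n H c = (\<lambda>i. if i < r then (\<Sum>j<n. H i j * c j) else 0)"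

definition full_rank :: "nat \<Rightarrow> nat \<Rightarrow> (nat \<Rightarrow> nat \<Rightarrow> 'a::comm_semiring_1) \<Rightarrow> bool" where
  "full_rank r n H \<longleftrightarrow> (\<forall>z. is_vec r z \<longrightarrow> (\<exists>c. is_vec n c \<and> matvec r n H c = z))"

definition code :: "nat \<Rightarrow> nat \<Rightarrow> (nat \<Rightarrow> nat \<Rightarrow> 'a::comm_semiring_1) \<Rightarrow> (nat \<Rightarrow> 'a) set" where
  "code r n H = {c. is_vec n c \<and> matvec r n H c = (\<lambda>_. 0)}"

definition cyc_burst :: "nat \<Rightarrow> nat \<Rightarrow> (nat \<Rightarrow> 'a::zero) \<Rightarrow> bool" where
  "cyc_burst n b c \<longleftrightarrow> (\<exists>i<n. \<forall>j. c j \<noteq> 0 \<longrightarrow> (\<exists>k<b. j = (i + k) mod n))"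

definition lin_burst :: "nat \<Rightarrow> nat \<Rightarrow> (nat \<Rightarrow> 'a::zero) \<Rightarrow> bool" where
  "lin_burst n b c \<longleftrightarrow> (\<exists>i. i + b \<le> n \<and> (\<forall>j. c j \<noteq> 0 \<longrightarrow> i \<le> j \<and> j < i + b))"

definition cyc_burst_covering :: "nat \<Rightarrow> nat \<Rightarrow> nat \<Rightarrow> (nat \<Rightarrow> nat \<Rightarrow> 'a::comm_semiring_1) \<Rightarrow> bool" where
  "cyc_burst_covering r n b H \<longleftrightarrow>
     (\<forall>z. is_vec r z \<longrightarrow> (\<exists>c. cyc_burst n b c \<and> matvec r n H c = z))"

definition lin_burst_covering :: "nat \<Rightarrow> nat \<Rightarrow> nat \<Rightarrow> (nat \<Rightarrow> nat \<Rightarrow> 'a::comm_semiring_1) \<Rightarrow> bool" where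
  "lin_burst_covering r n b H \<longleftrightarrow>
     (\<forall>z. is_vec r z \<longrightarrow> (\<exists>c. lin_burst n b c \<and> matvec r n H c = z))"

end

theory Submission
  imports Defs "HOL-Probability.Product_PMF"
begin

(* Count the nonzero bursts by the position p of their first nonzero entry: those starting at p
   are the vectors supported on a window of at most b positions beginning at p and nonzero at p,
   at most (q - 1) q^(b-1) of them (fewer near the right end in the non-cyclic case). Every
   nonzero syndrome in F_q^r is the syndrome of a nonzero burst, so q^r - 1 is at most the number
   of nonzero bursts; rearranging gives both bounds, in (a) after rounding with the integrality of
   (q^(r-b+1) - 1)/(q - 1).
   In (b) equality holds iff the syndrome map from nonzero bursts to nonzero syndromes is a
   bijection. Unique burst syndromes already exclude a nonzero burst codeword c: for a column
   h_j != 0 in the window of c, the bursts e_j and e_j + c would share the syndrome h_j. So the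
   columns in that window vanish, and since consecutive windows overlap, all columns vanish,
   contradicting the covering property. *)

lemma geometric_sum_nat:
  fixes q :: nat
  assumes "q \<ge> 1"
  shows "(q - 1) * (\<Sum>i<e. q ^ i) + 1 = q ^ e"
proof -
  have "int ((q - 1) * (\<Sum>i<e. q ^ i) + 1) = (int q - 1) * (\<Sum>i<e. int q ^ i) + 1"
    using assms by (simp add: of_nat_diff)
  also have "\<dots> = int (q ^ e)"
    by (simp add: power_diff_1_eq[symmetric])
  finally show ?thesis by (simp only: of_nat_eq_iff)
qed

lemma sum_power_min:
  fixes q :: nat
  assumes "q \<ge> 1" and "m \<le> n"
  shows "(\<Sum>s<n. (q - 1) * q ^ min m s) + 1 = (n - m) * (q - 1) * q ^ m + q ^ m"
  using assms(2)
proof (induction n rule: dec_induct)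
  case base
  have "(\<Sum>s<m. (q - 1) * q ^ min m s) = (q - 1) * (\<Sum>s<m. q ^ s)"
    by (simp add: sum_distrib_left)
  then show ?case using geometric_sum_nat[OF assms(1)] by simp
next
  case (step n)
  then show ?case by (simp add: Suc_diff_le algebra_simps)
qed

lemma power_le_mult_add_1_imp_power_le:
  fixes q n r b :: nat
  assumes "q \<ge> 2" "b \<ge> 2" "n \<ge> 1"
    and "q ^ r \<le> n * ((q - 1) * q ^ (b - 1)) + 1"
  shows "q ^ r \<le> ((n - 1) * (q - 1) + 1) * q ^ (b - 1)"
proof (cases "r < b - 1")
  case True
  then have "q ^ r \<le> q ^ (b - 1)" using assms(1) by (simp add: power_increasing)
  also have "\<dots> \<le> ((n - 1) * (q - 1) + 1) * q ^ (b - 1)" by simp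
  finally show ?thesis .
next
  case False
  \<comment> \<open>Dividing by q^(b-1) \<ge> 2 absorbs the +1, and q^e \<equiv> 1 mod (q - 1) then saves q - 2 more.\<close>
  then obtain e where r: "r = e + (b - 1)" by (metis add.commute le_add_diff_inverse not_less)
  define Q where "Q = q ^ (b - 1)"
  have "q ^ 1 \<le> Q"
    unfolding Q_def by (rule power_increasing) (use assms(1,2) in auto)
  then have "Q \<ge> 2" using assms(1) by simp
  have "q ^ e \<le> (q - 1) * n"
  proof (rule ccontr)
    assume "\<not> ?thesis"
    then have "(q - 1) * n + 1 \<le> q ^ e" by simp
    then have "((q - 1) * n + 1) * Q \<le> q ^ e * Q" by (rule mult_right_mono) simp
    then show False using assms(4) \<open>Q \<ge> 2\<close> unfolding r Q_def power_add by (simp add: algebra_simps)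
  qed
  moreover have geo: "(q - 1) * (\<Sum>i<e. q ^ i) + 1 = q ^ e"
    using geometric_sum_nat assms(1) by simp
  ultimately have "(q - 1) * (\<Sum>i<e. q ^ i) < (q - 1) * n" by linarith
  then have "(\<Sum>i<e. q ^ i) < n" by simp
  then have "(\<Sum>i<e. q ^ i) \<le> n - 1" by arith
  then have "q ^ e \<le> (n - 1) * (q - 1) + 1"
    using geo by (metis add_le_mono1 mult.commute mult_le_mono2)
  then show ?thesis unfolding r power_add by (rule mult_right_mono) simp
qed

lemma burst_bound_iff:
  fixes x t :: real
  assumes "x > 1" "b \<ge> 1"
  shows "(x powi (int r - int b + 1) - 1) / (x - 1) \<le> t \<longleftrightarrow> x ^ r \<le> (t * (x - 1) + 1) * x ^ (b - 1)"
    and "(x powi (int r - int b + 1) - 1) / (x - 1) = t \<longleftrightarrow> x ^ r = (t * (x - 1) + 1) * x ^ (b - 1)"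
proof -
  define X where "X = (x powi (int r - int b + 1) - 1) / (x - 1)"
  define f where "f s = (s * (x - 1) + 1) * x ^ (b - 1)" for s
  have "f X = x powi (int r - int b + 1) * x powi int (b - 1)"
    using assms(1) unfolding f_def X_def by (simp add: power_int_of_nat)
  also have "\<dots> = x ^ r"
    using assms by (simp add: power_int_add[symmetric] of_nat_diff)
  finally have fX: "f X = x ^ r" .
  have mono: "f s \<le> f s' \<longleftrightarrow> s \<le> s'" for s s'
    using assms(1) unfolding f_def by (simp add: mult_le_cancel_right_pos)
  have inj: "f s = f s' \<longleftrightarrow> s = s'" for s s'
    using mono[of s s'] mono[of s' s] by (metis order.eq_iff)
  show "X \<le> t \<longleftrightarrow> x ^ r \<le> f t" using mono[of X t] fX by simp
  show "X = t \<longleftrightarrow> x ^ r = f t" using inj[of X t] fX by simp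
qed

lemma two_le_card_UNIV: "2 \<le> CARD('a::{zero_neq_one,finite})"
  using card_mono[of UNIV "{0::'a, 1}"] by simp

definition nonzero_at :: "'i \<Rightarrow> 'i \<Rightarrow> 'a::zero set" where
  "nonzero_at p j = (if j = p then - {0} else UNIV)"

lemma card_PiE_dflt_nonzero_at:
  fixes D :: "'i set"
  assumes "finite D" "p \<in> D"
  shows "card (PiE_dflt D 0 (nonzero_at p) :: ('i \<Rightarrow> 'a::{zero,finite}) set)
           = (CARD('a) - 1) * CARD('a) ^ (card D - 1)"
proof -
  have "card (PiE_dflt D 0 (nonzero_at p) :: ('i \<Rightarrow> 'a) set)
          = card (- {0::'a}) * (\<Prod>j\<in>D - {p}. card (nonzero_at p j :: 'a set))"
    using assms by (simp add: card_PiE_dflt prod.remove nonzero_at_def)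
  also have "(\<Prod>j\<in>D - {p}. card (nonzero_at p j :: 'a set)) = CARD('a) ^ (card D - 1)"
    using assms by (simp add: nonzero_at_def card_Diff_singleton)
  also have "card (- {0::'a}) = CARD('a) - 1"
    by (simp add: Compl_eq_Diff_UNIV card_Diff_subset)
  finally show ?thesis .
qed

lemma is_vec_eq_PiE_dflt: "{z. is_vec m z} = PiE_dflt {..<m} 0 (\<lambda>_. UNIV)"
  by (auto simp: is_vec_def PiE_dflt_def not_less)

lemma finite_is_vec: "finite {z :: nat \<Rightarrow> 'a::{zero,finite}. is_vec m z}"
  unfolding is_vec_eq_PiE_dflt by (rule finite_PiE_dflt) auto

lemma card_nonzero_is_vec:
  "card ({z :: nat \<Rightarrow> 'a::{zero,finite}. is_vec m z} - {\<lambda>_. 0}) = CARD('a) ^ m - 1"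
proof -
  have "(\<lambda>_. 0) \<in> {z :: nat \<Rightarrow> 'a. is_vec m z}" by (simp add: is_vec_def)
  moreover have "card {z :: nat \<Rightarrow> 'a. is_vec m z} = CARD('a) ^ m"
    unfolding is_vec_eq_PiE_dflt by (simp add: card_PiE_dflt)
  ultimately show ?thesis using finite_is_vec by (simp add: card_Diff_singleton)
qed

lemma matvec_zero: "matvec r n H (\<lambda>_. 0) = (\<lambda>_. 0)"
  by (simp add: matvec_def fun_eq_iff)

lemma is_vec_matvec: "is_vec r (matvec r n H c)"
  by (simp add: is_vec_def matvec_def)

lemma matvec_add: "matvec r n H (\<lambda>j. c j + d j) = (\<lambda>i. matvec r n H c i + matvec r n H d i)"
  by (simp add: matvec_def fun_eq_iff distrib_left sum.distrib)

lemma matvec_unit: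
  assumes "j < n"
  shows "matvec r n H (\<lambda>k. if k = j then 1 else 0) = (\<lambda>i. if i < r then H i j else 0)"
  using assms by (simp add: matvec_def fun_eq_iff if_distrib[of "\<lambda>x. _ * x"] sum.delta cong: if_cong)

lemma nonzero_syndromes_subset_image:
  fixes H :: "nat \<Rightarrow> nat \<Rightarrow> 'a::comm_semiring_1"
  assumes "\<forall>z. is_vec r z \<longrightarrow> (\<exists>c. P c \<and> matvec r n H c = z)"
  shows "{z. is_vec r z} - {\<lambda>_. 0} \<subseteq> matvec r n H ` {c. c \<noteq> (\<lambda>_. 0) \<and> P c}"
proof
  fix z :: "nat \<Rightarrow> 'a" assume "z \<in> {z. is_vec r z} - {\<lambda>_. 0}"
  then obtain c where "P c" "matvec r n H c = z" "z \<noteq> (\<lambda>_. 0)" using assms by blast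
  then show "z \<in> matvec r n H ` {c. c \<noteq> (\<lambda>_. 0) \<and> P c}" using matvec_zero by fastforce
qed

lemma card_nonzero_bursts_ge:
  fixes H :: "nat \<Rightarrow> nat \<Rightarrow> 'a::{comm_semiring_1,finite}"
  assumes "\<forall>z. is_vec r z \<longrightarrow> (\<exists>c. P c \<and> matvec r n H c = z)"
    and "finite {c. c \<noteq> (\<lambda>_. 0) \<and> P c}"
  shows "CARD('a) ^ r - 1 \<le> card {c. c \<noteq> (\<lambda>_. 0) \<and> P c}"
proof -
  have "CARD('a) ^ r - 1 = card ({z :: nat \<Rightarrow> 'a. is_vec r z} - {\<lambda>_. 0})"
    by (rule card_nonzero_is_vec[symmetric])
  also have "\<dots> \<le> card (matvec r n H ` {c. c \<noteq> (\<lambda>_. 0) \<and> P c})"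
    using nonzero_syndromes_subset_image[OF assms(1)] assms(2) by (intro card_mono) simp_all
  also have "\<dots> \<le> card {c. c \<noteq> (\<lambda>_. 0) \<and> P c}"
    using assms(2) by (rule card_image_le)
  finally show ?thesis .
qed

lemma bij_betw_iff_card_eq:
  assumes "finite B" "Y \<subseteq> f ` B" "f ` B \<subseteq> insert y Y" "y \<notin> Y"
  shows "bij_betw f B Y \<longleftrightarrow> card B = card Y"
proof
  assume "card B = card Y"
  have "finite Y" using assms(1,2) finite_surj by blast
  have "card Y \<le> card (f ` B)" using assms(1,2) by (simp add: card_mono)
  then have card_image: "card (f ` B) = card B"
    using \<open>card B = card Y\<close> card_image_le[OF assms(1), of f] by simp
  have "y \<notin> f ` B"
  proof
    assume "y \<in> f ` B"
    then have "card (insert y Y) \<le> card (f ` B)" using assms(1,2) by (simp add: card_mono)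
    then show False using card_image \<open>card B = card Y\<close> \<open>finite Y\<close> assms(4) by simp
  qed
  then have "f ` B = Y" using assms(2,3) by blast
  then show "bij_betw f B Y"
    using eq_card_imp_inj_on[OF assms(1) card_image] by (simp add: bij_betw_def)
qed (rule bij_betw_same_card)

lemma bij_betw_imp_ex1:
  assumes "bij_betw f A B" "y \<in> B"
  shows "\<exists>!x. x \<in> A \<and> f x = y"
  using assms by (auto simp: bij_betw_def inj_on_def)

definition cyc_window :: "nat \<Rightarrow> nat \<Rightarrow> nat \<Rightarrow> nat set" where
  "cyc_window n b i = (\<lambda>k. (i + k) mod n) ` {..<b}"

lemma cyc_burst_in_PiE_dflt_cyc_window:
  assumes "cyc_burst n b c" "c \<noteq> (\<lambda>_. 0)"
  shows "\<exists>i<n. c \<in> PiE_dflt (cyc_window n b i) 0 (nonzero_at i)"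
proof -
  obtain i where "i < n" and supp: "\<forall>j. c j \<noteq> 0 \<longrightarrow> (\<exists>k<b. j = (i + k) mod n)"
    using assms(1) unfolding cyc_burst_def by blast
  obtain k1 where "c ((i + k1) mod n) \<noteq> 0" using assms(2) supp by blast
  define k0 where "k0 = (LEAST k. c ((i + k) mod n) \<noteq> 0)"
  have k0: "c ((i + k0) mod n) \<noteq> 0"
    unfolding k0_def by (rule LeastI) fact
  have before_k0: "c ((i + k) mod n) = 0" if "k < k0" for k
    using not_less_Least[OF that[unfolded k0_def]] by simp
  define i' where "i' = (i + k0) mod n"
  have "c j = 0" if "j \<notin> cyc_window n b i'" for j
  proof (rule ccontr)
    assume "c j \<noteq> 0"
    then obtain k where k: "k < b" "j = (i + k) mod n" using supp by blast
    with before_k0 \<open>c j \<noteq> 0\<close> have "k0 \<le> k" by (meson not_less)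
    then have "j = (i' + (k - k0)) mod n"
      unfolding i'_def k(2) mod_add_left_eq by (simp add: add.assoc)
    with k(1) have "j \<in> cyc_window n b i'" unfolding cyc_window_def by force
    with that show False by simp
  qed
  moreover have "i' < n" unfolding i'_def using \<open>i < n\<close> by simp
  ultimately show ?thesis
    using k0 unfolding i'_def by (auto simp: PiE_dflt_def nonzero_at_def)
qed

lemma
  fixes n b :: nat
  assumes "b \<ge> 1"
  shows finite_nonzero_cyc_bursts: "finite {c :: nat \<Rightarrow> 'a::{zero,finite}. c \<noteq> (\<lambda>_. 0) \<and> cyc_burst n b c}"
    and card_nonzero_cyc_bursts_le: "card {c :: nat \<Rightarrow> 'a. c \<noteq> (\<lambda>_. 0) \<and> cyc_burst n b c}
                                       \<le> n * ((CARD('a) - 1) * CARD('a) ^ (b - 1))"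
proof -
  define T :: "nat \<Rightarrow> (nat \<Rightarrow> 'a) set" where "T i = PiE_dflt (cyc_window n b i) 0 (nonzero_at i)" for i
  have sub: "{c. c \<noteq> (\<lambda>_. 0) \<and> cyc_burst n b c} \<subseteq> (\<Union>i<n. T i)"
    unfolding T_def using cyc_burst_in_PiE_dflt_cyc_window by blast
  have fin: "finite (T i)" for i
    unfolding T_def cyc_window_def by (rule finite_PiE_dflt) auto
  have card_T: "card (T i) \<le> (CARD('a) - 1) * CARD('a) ^ (b - 1)" if "i < n" for i
  proof -
    have "i \<in> cyc_window n b i" "card (cyc_window n b i) \<le> b"
      unfolding cyc_window_def using assms that card_image_le[of "{..<b}"]
      by (auto intro!: image_eqI[of _ _ 0])
    then show ?thesis unfolding T_def
      by (auto simp: card_PiE_dflt_nonzero_at cyc_window_def intro!: power_increasing)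
  qed
  have "card (\<Union>i<n. T i) \<le> (\<Sum>i<n. card (T i))" by (rule card_UN_le) simp
  also have "\<dots> \<le> n * ((CARD('a) - 1) * CARD('a) ^ (b - 1))"
    using sum_bounded_above[of "{..<n}" "\<lambda>i. card (T i)"] card_T by simp
  finally have "card (\<Union>i<n. T i) \<le> n * ((CARD('a) - 1) * CARD('a) ^ (b - 1))" .
  moreover have fin_UN: "finite (\<Union>i<n. T i)" using fin by blast
  ultimately show "card {c :: nat \<Rightarrow> 'a. c \<noteq> (\<lambda>_. 0) \<and> cyc_burst n b c} \<le> n * ((CARD('a) - 1) * CARD('a) ^ (b - 1))"
    using card_mono[OF fin_UN sub] by linarith
  show "finite {c :: nat \<Rightarrow> 'a. c \<noteq> (\<lambda>_. 0) \<and> cyc_burst n b c}"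
    using finite_subset[OF sub fin_UN] .
qed

lemma cyc_burst_covering_length_bound:
  fixes H :: "nat \<Rightarrow> nat \<Rightarrow> 'a::{finite,field}"
  assumes "b \<ge> 2" "cyc_burst_covering r n b H"
  shows "real n \<ge> (real CARD('a) powi (int r - int b + 1) - 1) / (real CARD('a) - 1) + 1"
proof -
  define q where "q = CARD('a)"
  have "q \<ge> 2" unfolding q_def by (rule two_le_card_UNIV)
  have cov: "\<forall>z. is_vec r z \<longrightarrow> (\<exists>c. cyc_burst n b c \<and> matvec r n H c = z)"
    using assms(2) unfolding cyc_burst_covering_def .
  then obtain c :: "nat \<Rightarrow> 'a" where "cyc_burst n b c" by (metis is_vec_matvec)
  then have "n \<ge> 1" unfolding cyc_burst_def by auto
  have "b \<ge> 1" using assms(1) by simp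
  have "q ^ r - 1 \<le> card {c :: nat \<Rightarrow> 'a. c \<noteq> (\<lambda>_. 0) \<and> cyc_burst n b c}"
    unfolding q_def by (rule card_nonzero_bursts_ge[OF cov finite_nonzero_cyc_bursts[OF \<open>b \<ge> 1\<close>]])
  also have "\<dots> \<le> n * ((q - 1) * q ^ (b - 1))"
    unfolding q_def by (rule card_nonzero_cyc_bursts_le[OF \<open>b \<ge> 1\<close>])
  finally have "q ^ r - 1 \<le> n * ((q - 1) * q ^ (b - 1))" .
  then have "q ^ r \<le> ((n - 1) * (q - 1) + 1) * q ^ (b - 1)"
    using power_le_mult_add_1_imp_power_le \<open>q \<ge> 2\<close> assms(1) \<open>n \<ge> 1\<close> by simp
  then have "real (q ^ r) \<le> real (((n - 1) * (q - 1) + 1) * q ^ (b - 1))"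
    by (simp only: of_nat_le_iff)
  moreover have "real (n - 1) = real n - 1" "real (q - 1) = real q - 1"
    using \<open>q \<ge> 2\<close> \<open>n \<ge> 1\<close> by (simp_all add: of_nat_diff)
  ultimately have "real q ^ r \<le> ((real n - 1) * (real q - 1) + 1) * real q ^ (b - 1)"
    by (simp only: of_nat_mult of_nat_add of_nat_power of_nat_1)
  then show ?thesis
    using burst_bound_iff(1)[of "real q" b r "real n - 1"] \<open>q \<ge> 2\<close> assms(1) unfolding q_def by simp
qed

lemma Least_nonzero_PiE_dflt_nonzero_at:
  fixes p m :: nat
  assumes "c \<in> PiE_dflt {p..<m} 0 (nonzero_at p)" "p < m"
  shows "(LEAST j. c j \<noteq> 0) = p"
  by (rule Least_equality) (use assms in \<open>auto simp: PiE_dflt_def nonzero_at_def not_le\<close>)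

lemma nonzero_lin_bursts_eq_UN:
  assumes "1 \<le> b" "b \<le> n"
  shows "{c :: nat \<Rightarrow> 'a::zero. c \<noteq> (\<lambda>_. 0) \<and> lin_burst n b c}
           = (\<Union>p<n. PiE_dflt {p..<min (p + b) n} 0 (nonzero_at p))"
proof (intro equalityI subsetI)
  fix c :: "nat \<Rightarrow> 'a" assume "c \<in> {c. c \<noteq> (\<lambda>_. 0) \<and> lin_burst n b c}"
  then obtain i where "i + b \<le> n" and supp: "\<forall>j. c j \<noteq> 0 \<longrightarrow> i \<le> j \<and> j < i + b"
    and "\<exists>j. c j \<noteq> 0" unfolding lin_burst_def by (auto simp: fun_eq_iff)
  define p where "p = (LEAST j. c j \<noteq> 0)"
  have "c p \<noteq> 0" unfolding p_def using \<open>\<exists>j. c j \<noteq> 0\<close> by (rule LeastI_ex)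
  have before_p: "c j = 0" if "j < p" for j using not_less_Least[OF that[unfolded p_def]] by simp
  from supp \<open>c p \<noteq> 0\<close> have "i \<le> p" "p < i + b" by auto
  with \<open>i + b \<le> n\<close> have "p < n" by simp
  have "c j = 0" if "j \<notin> {p..<min (p + b) n}" for j
  proof (rule ccontr)
    assume "c j \<noteq> 0"
    with supp have "j < i + b" by auto
    moreover from before_p \<open>c j \<noteq> 0\<close> have "\<not> j < p" by blast
    ultimately show False using \<open>i \<le> p\<close> \<open>i + b \<le> n\<close> that by simp
  qed
  with \<open>c p \<noteq> 0\<close> have "c \<in> PiE_dflt {p..<min (p + b) n} 0 (nonzero_at p)"
    by (auto simp: PiE_dflt_def nonzero_at_def)
  with \<open>p < n\<close> show "c \<in> (\<Union>p<n. PiE_dflt {p..<min (p + b) n} 0 (nonzero_at p))" by blast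
next
  fix c :: "nat \<Rightarrow> 'a" assume "c \<in> (\<Union>p<n. PiE_dflt {p..<min (p + b) n} 0 (nonzero_at p))"
  then obtain p where "p < n" and c: "c \<in> PiE_dflt {p..<min (p + b) n} 0 (nonzero_at p)" by blast
  then have "p \<in> {p..<min (p + b) n}" using assms(1) by simp
  with c have "c p \<in> nonzero_at p p" unfolding PiE_dflt_def by blast
  then have "c p \<noteq> 0" by (simp add: nonzero_at_def)
  have "j \<in> {p..<min (p + b) n}" if "c j \<noteq> 0" for j
    using c that by (auto simp: PiE_dflt_def)
  then have "lin_burst n b c"
    unfolding lin_burst_def using assms(2) by (intro exI[of _ "min p (n - b)"]) fastforce
  with \<open>c p \<noteq> 0\<close> show "c \<in> {c. c \<noteq> (\<lambda>_. 0) \<and> lin_burst n b c}" by auto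
qed

lemma
  assumes "1 \<le> b" "b \<le> n"
  shows finite_nonzero_lin_bursts: "finite {c :: nat \<Rightarrow> 'a::{zero,finite}. c \<noteq> (\<lambda>_. 0) \<and> lin_burst n b c}"
    and card_nonzero_lin_bursts: "card {c :: nat \<Rightarrow> 'a. c \<noteq> (\<lambda>_. 0) \<and> lin_burst n b c} + 1
           = (n - b + 1) * (CARD('a) - 1) * CARD('a) ^ (b - 1) + CARD('a) ^ (b - 1)"
proof -
  define q where "q = CARD('a)"
  define T :: "nat \<Rightarrow> (nat \<Rightarrow> 'a) set" where "T p = PiE_dflt {p..<min (p + b) n} 0 (nonzero_at p)" for p
  have fin: "finite (T p)" for p unfolding T_def by (rule finite_PiE_dflt) auto
  show "finite {c :: nat \<Rightarrow> 'a. c \<noteq> (\<lambda>_. 0) \<and> lin_burst n b c}"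
    unfolding nonzero_lin_bursts_eq_UN[OF assms] T_def[symmetric] using fin by blast
  have Least_T: "(LEAST j. c j \<noteq> 0) = p" if "c \<in> T p" "p < n" for c p
    using that assms(1) unfolding T_def
    by (intro Least_nonzero_PiE_dflt_nonzero_at[where m = "min (p + b) n"]) auto
  have disj: "T p \<inter> T p' = {}" if "p < n" "p' < n" "p \<noteq> p'" for p p'
    using Least_T[of _ p] Least_T[of _ p'] that by blast
  have "card {c :: nat \<Rightarrow> 'a. c \<noteq> (\<lambda>_. 0) \<and> lin_burst n b c} = (\<Sum>p<n. card (T p))"
    unfolding nonzero_lin_bursts_eq_UN[OF assms] T_def[symmetric]
    using fin disj by (intro card_UN_disjoint) auto
  also have "\<dots> = (\<Sum>p<n. (q - 1) * q ^ min (b - 1) (n - Suc p))"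
  proof (rule sum.cong)
    fix p assume "p \<in> {..<n}"
    then have "card (T p) = (q - 1) * q ^ (min (p + b) n - p - 1)"
      unfolding T_def q_def using assms(1) by (subst card_PiE_dflt_nonzero_at) auto
    also have "min (p + b) n - p - 1 = min (b - 1) (n - Suc p)" by (simp add: min_def)
    finally show "card (T p) = (q - 1) * q ^ min (b - 1) (n - Suc p)" .
  qed simp
  also have "\<dots> = (\<Sum>s<n. (q - 1) * q ^ min (b - 1) s)"
    by (rule sum.nat_diff_reindex)
  finally have "card {c :: nat \<Rightarrow> 'a. c \<noteq> (\<lambda>_. 0) \<and> lin_burst n b c} + 1
      = (\<Sum>s<n. (q - 1) * q ^ min (b - 1) s) + 1" by simp
  also have "\<dots> = (n - (b - 1)) * (q - 1) * q ^ (b - 1) + q ^ (b - 1)"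
    by (rule sum_power_min) (use assms in \<open>simp_all add: q_def finite_UNIV_card_ge_0 Suc_leI\<close>)
  also have "n - (b - 1) = n - b + 1" using assms by simp
  finally show "card {c :: nat \<Rightarrow> 'a. c \<noteq> (\<lambda>_. 0) \<and> lin_burst n b c} + 1
      = (n - b + 1) * (CARD('a) - 1) * CARD('a) ^ (b - 1) + CARD('a) ^ (b - 1)"
    unfolding q_def .
qed

lemma burst_codeword_window_columns_zero:
  fixes H :: "nat \<Rightarrow> nat \<Rightarrow> 'a::comm_ring_1"
  assumes unique: "\<forall>z. is_vec r z \<and> z \<noteq> (\<lambda>_. 0) \<longrightarrow>
                     (\<exists>!c. c \<noteq> (\<lambda>_. 0) \<and> lin_burst n b c \<and> matvec r n H c = z)"
    and "c \<noteq> (\<lambda>_. 0)" "i + b \<le> n" "\<forall>j. c j \<noteq> 0 \<longrightarrow> i \<le> j \<and> j < i + b"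
    and "matvec r n H c = (\<lambda>_. 0)" "i \<le> j" "j < i + b"
  shows "\<forall>l<r. H l j = 0"
proof (rule ccontr)
  \<comment> \<open>Otherwise e_j and e_j + c are distinct nonzero bursts with the same syndrome h_j.\<close>
  assume "\<not> (\<forall>l<r. H l j = 0)"
  define e :: "nat \<Rightarrow> 'a" where "e = (\<lambda>k. if k = j then 1 else 0)"
  define z where "z = matvec r n H e"
  have "z = (\<lambda>l. if l < r then H l j else 0)"
    unfolding z_def e_def using assms(3,7) by (intro matvec_unit) simp
  with \<open>\<not> (\<forall>l<r. H l j = 0)\<close> have "z \<noteq> (\<lambda>_. 0)" by (auto simp: fun_eq_iff)
  have "matvec r n H (\<lambda>k. e k + c k) = z"
    unfolding matvec_add z_def assms(5) by simp
  moreover have "(\<lambda>k. e k + c k) \<noteq> (\<lambda>_. 0)"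
    using \<open>z \<noteq> (\<lambda>_. 0)\<close> calculation by (metis matvec_zero)
  moreover have "e \<noteq> (\<lambda>_. 0)" by (auto simp: e_def fun_eq_iff)
  moreover have "lin_burst n b e" "lin_burst n b (\<lambda>k. e k + c k)"
    unfolding lin_burst_def e_def using assms(3,4,6,7) by (intro exI[of _ i]; force)+
  ultimately have "(\<lambda>k. e k + c k) = e"
    using unique is_vec_matvec \<open>z \<noteq> (\<lambda>_. 0)\<close> unfolding z_def by blast
  then show False using \<open>c \<noteq> (\<lambda>_. 0)\<close> by (auto simp: fun_eq_iff)
qed

lemma zero_column_imp_zero_columns:
  fixes H :: "nat \<Rightarrow> nat \<Rightarrow> 'a::comm_ring_1"
  assumes unique: "\<forall>z. is_vec r z \<and> z \<noteq> (\<lambda>_. 0) \<longrightarrow>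
                     (\<exists>!c. c \<noteq> (\<lambda>_. 0) \<and> lin_burst n b c \<and> matvec r n H c = z)"
    and "2 \<le> b" "b \<le> n" "\<forall>l<r. H l j0 = 0" "j0 < n" "j < n"
  shows "\<forall>l<r. H l j = 0"
proof -
  define zero_col where "zero_col k \<longleftrightarrow> (\<forall>l<r. H l k = 0)" for k
  have zero_col_Suc: "zero_col (Suc k) \<longleftrightarrow> zero_col k" if "Suc k < n" for k
  proof -
    \<comment> \<open>A zero column m gives the burst codeword e_m in any window containing m.\<close>
    define w where "w = min k (n - b)"
    have w: "w + b \<le> n" "w \<le> k" "Suc k < w + b" unfolding w_def using that assms(2,3) by auto
    have "zero_col m'" if "zero_col m" "m \<in> {k, Suc k}" "m' \<in> {k, Suc k}" for m m'
    proof -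
      define e :: "nat \<Rightarrow> 'a" where "e = (\<lambda>i. if i = m then 1 else 0)"
      have "matvec r n H e = (\<lambda>_. 0)"
        unfolding e_def using matvec_unit[of m n r H] \<open>zero_col m\<close> \<open>m \<in> {k, Suc k}\<close> \<open>Suc k < n\<close>
        by (auto simp: zero_col_def fun_eq_iff)
      moreover have "e \<noteq> (\<lambda>_. 0)" "\<forall>i. e i \<noteq> 0 \<longrightarrow> w \<le> i \<and> i < w + b"
        using w \<open>m \<in> {k, Suc k}\<close> by (auto simp: e_def fun_eq_iff)
      ultimately show ?thesis
        using burst_codeword_window_columns_zero[OF unique _ w(1), of e m'] w \<open>m' \<in> {k, Suc k}\<close>
        unfolding zero_col_def by auto
    qed
    then show ?thesis by blast
  qed
  have "zero_col k \<longleftrightarrow> zero_col 0" if "k < n" for k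
    using that by (induction k) (simp_all add: zero_col_Suc)
  then show ?thesis using assms(4-6) unfolding zero_col_def by blast
qed

lemma unique_burst_syndromes_imp_no_burst_codeword:
  fixes H :: "nat \<Rightarrow> nat \<Rightarrow> 'a::comm_ring_1"
  assumes "r \<ge> 1" "b \<ge> 2" "lin_burst_covering r n b H"
    and unique: "\<forall>z. is_vec r z \<and> z \<noteq> (\<lambda>_. 0) \<longrightarrow>
                   (\<exists>!c. c \<noteq> (\<lambda>_. 0) \<and> lin_burst n b c \<and> matvec r n H c = z)"
    and "c \<noteq> (\<lambda>_. 0)" "lin_burst n b c"
  shows "matvec r n H c \<noteq> (\<lambda>_. 0)"
proof
  assume "matvec r n H c = (\<lambda>_. 0)"
  obtain i where i: "i + b \<le> n" "\<forall>j. c j \<noteq> 0 \<longrightarrow> i \<le> j \<and> j < i + b"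
    using \<open>lin_burst n b c\<close> unfolding lin_burst_def by blast
  have "\<forall>l<r. H l i = 0"
    using burst_codeword_window_columns_zero[OF unique \<open>c \<noteq> (\<lambda>_. 0)\<close> i \<open>matvec r n H c = (\<lambda>_. 0)\<close>]
      assms(2) by simp
  then have "\<forall>l<r. H l j = 0" if "j < n" for j
    using zero_column_imp_zero_columns[OF unique assms(2)] i(1) assms(2) that by simp
  then have all_zero: "matvec r n H d = (\<lambda>_. 0)" for d
    by (simp add: matvec_def fun_eq_iff)
  have "is_vec r (\<lambda>l. if l = 0 then 1 else 0 :: 'a)"
    using assms(1) by (simp add: is_vec_def)
  then obtain d where "matvec r n H d = (\<lambda>l. if l = 0 then 1 else 0)"
    using assms(3) unfolding lin_burst_covering_def by blast
  then have "1 = matvec r n H d 0" by simp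
  also have "\<dots> = 0" by (simp add: all_zero)
  finally show False by simp
qed

lemma unique_burst_syndromes_iff_bij_betw:
  fixes H :: "nat \<Rightarrow> nat \<Rightarrow> 'a::comm_ring_1"
  assumes "r \<ge> 1" "b \<ge> 2" "lin_burst_covering r n b H"
  shows "(\<forall>z. is_vec r z \<and> z \<noteq> (\<lambda>_. 0) \<longrightarrow>
            (\<exists>!c. c \<noteq> (\<lambda>_. 0) \<and> lin_burst n b c \<and> matvec r n H c = z))
         \<longleftrightarrow> bij_betw (matvec r n H) {c. c \<noteq> (\<lambda>_. 0) \<and> lin_burst n b c} ({z. is_vec r z} - {\<lambda>_. 0})"
    (is "?unique \<longleftrightarrow> bij_betw ?f ?B ?Y")
proof
  assume unique: ?unique
  have f_in_Y: "?f c \<in> ?Y" if "c \<in> ?B" for c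
    using that unique_burst_syndromes_imp_no_burst_codeword[OF assms unique, of c] is_vec_matvec
    by simp
  then have "?f ` ?B \<subseteq> ?Y" by (rule image_subsetI)
  moreover have "?Y \<subseteq> ?f ` ?B"
    using assms(3) unfolding lin_burst_covering_def by (rule nonzero_syndromes_subset_image)
  moreover have "inj_on ?f ?B"
  proof (rule inj_onI)
    fix c c' assume "c \<in> ?B" "c' \<in> ?B" "?f c = ?f c'"
    have ex1: "\<exists>!d. d \<noteq> (\<lambda>_. 0) \<and> lin_burst n b d \<and> ?f d = ?f c"
      using unique f_in_Y[OF \<open>c \<in> ?B\<close>] by simp
    have "c \<noteq> (\<lambda>_. 0) \<and> lin_burst n b c \<and> ?f c = ?f c"
      and "c' \<noteq> (\<lambda>_. 0) \<and> lin_burst n b c' \<and> ?f c' = ?f c"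
      using \<open>c \<in> ?B\<close> \<open>c' \<in> ?B\<close> \<open>?f c = ?f c'\<close> by simp_all
    from this[THEN the1_equality[OF ex1]] show "c = c'" by simp
  qed
  ultimately show "bij_betw ?f ?B ?Y" by (simp add: bij_betw_def subset_antisym)
next
  assume bij: "bij_betw ?f ?B ?Y"
  show ?unique
  proof (intro allI impI)
    fix z :: "nat \<Rightarrow> 'a" assume "is_vec r z \<and> z \<noteq> (\<lambda>_. 0)"
    then have "z \<in> ?Y" by simp
    from bij_betw_imp_ex1[OF bij this]
    show "\<exists>!c. c \<noteq> (\<lambda>_. 0) \<and> lin_burst n b c \<and> matvec r n H c = z" by simp
  qed
qed

lemma lin_burst_covering_card_bound:
  fixes H :: "nat \<Rightarrow> nat \<Rightarrow> 'a::{finite,field}"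
  assumes "r \<ge> 1" "b \<ge> 2" "lin_burst_covering r n b H"
  defines "N \<equiv> (n - b + 1) * (CARD('a) - 1) * CARD('a) ^ (b - 1) + CARD('a) ^ (b - 1)"
  shows "b \<le> n" and "CARD('a) ^ r \<le> N"
    and "CARD('a) ^ r = N \<longleftrightarrow> (\<forall>z. is_vec r z \<and> z \<noteq> (\<lambda>_. 0) \<longrightarrow>
                 (\<exists>!c. c \<noteq> (\<lambda>_. 0) \<and> lin_burst n b c \<and> matvec r n H c = z))"
proof -
  define B where "B = {c :: nat \<Rightarrow> 'a. c \<noteq> (\<lambda>_. 0) \<and> lin_burst n b c}"
  define Y where "Y = {z :: nat \<Rightarrow> 'a. is_vec r z} - {\<lambda>_. 0}"
  have cov: "\<forall>z. is_vec r z \<longrightarrow> (\<exists>c. lin_burst n b c \<and> matvec r n H c = z)"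
    using assms(3) unfolding lin_burst_covering_def .
  then obtain c :: "nat \<Rightarrow> 'a" where "lin_burst n b c" by (metis is_vec_matvec)
  then show "b \<le> n" unfolding lin_burst_def by auto
  then have "1 \<le> b" "b \<le> n" using assms(2) by simp_all
  note B_fin = finite_nonzero_lin_bursts[OF this, where 'a = 'a]
  have card_B: "card B + 1 = N"
    unfolding B_def N_def by (rule card_nonzero_lin_bursts[OF \<open>1 \<le> b\<close> \<open>b \<le> n\<close>])
  have card_Y: "card Y = CARD('a) ^ r - 1" unfolding Y_def by (rule card_nonzero_is_vec)
  have "CARD('a) ^ r - 1 \<le> card B"
    unfolding B_def by (rule card_nonzero_bursts_ge[OF cov B_fin])
  then show "CARD('a) ^ r \<le> N" using card_B by linarith
  have "1 \<le> CARD('a) ^ r" using two_le_card_UNIV[where 'a = 'a] by simp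
  then have "card B = card Y \<longleftrightarrow> CARD('a) ^ r = N" using card_B card_Y by linarith
  moreover have "bij_betw (matvec r n H) B Y \<longleftrightarrow> card B = card Y"
  proof (rule bij_betw_iff_card_eq)
    show "finite B" unfolding B_def by (rule B_fin)
    show "Y \<subseteq> matvec r n H ` B"
      unfolding Y_def B_def by (rule nonzero_syndromes_subset_image[OF cov])
    show "matvec r n H ` B \<subseteq> insert (\<lambda>_. 0) Y" "(\<lambda>_. 0) \<notin> Y"
      unfolding Y_def using is_vec_matvec by auto
  qed
  ultimately show "CARD('a) ^ r = N \<longleftrightarrow> (\<forall>z. is_vec r z \<and> z \<noteq> (\<lambda>_. 0) \<longrightarrow>
                 (\<exists>!c. c \<noteq> (\<lambda>_. 0) \<and> lin_burst n b c \<and> matvec r n H c = z))"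
    using unique_burst_syndromes_iff_bij_betw[OF assms(1-3)] unfolding B_def Y_def by simp
qed

lemma lin_burst_covering_length_bound:
  fixes H :: "nat \<Rightarrow> nat \<Rightarrow> 'a::{finite,field}"
  assumes "r \<ge> 1" "b \<ge> 2" "lin_burst_covering r n b H"
  defines "X \<equiv> (real CARD('a) powi (int r - int b + 1) - 1) / (real CARD('a) - 1)"
  shows "real n \<ge> X + real b - 1
         \<and> (real n = X + real b - 1 \<longleftrightarrow>
              (\<forall>z. is_vec r z \<and> z \<noteq> (\<lambda>_. 0) \<longrightarrow>
                 (\<exists>!c. c \<noteq> (\<lambda>_. 0) \<and> lin_burst n b c \<and> matvec r n H c = z)))"
proof -
  define q where "q = CARD('a)"
  define N where "N = (n - b + 1) * (q - 1) * q ^ (b - 1) + q ^ (b - 1)"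
  note count = lin_burst_covering_card_bound[OF assms(1-3), folded q_def, folded N_def]
  have "q \<ge> 2" unfolding q_def by (rule two_le_card_UNIV)
  have "real (n - b + 1) = real n - real b + 1" "real (q - 1) = real q - 1"
    using count(1) \<open>q \<ge> 2\<close> by (simp_all add: of_nat_diff)
  then have N_real: "real N = ((real n - real b + 1) * (real q - 1) + 1) * real q ^ (b - 1)"
    unfolding N_def by (simp only: of_nat_mult of_nat_add of_nat_power of_nat_1) (simp add: algebra_simps)
  have X_q: "X = (real q powi (int r - int b + 1) - 1) / (real q - 1)"
    unfolding X_def q_def ..
  have "real q > 1" "b \<ge> 1" using \<open>q \<ge> 2\<close> assms(2) by simp_all
  have "X \<le> real n - real b + 1 \<longleftrightarrow> real (q ^ r) \<le> real N"
    unfolding X_q N_real of_nat_power by (rule burst_bound_iff(1)) fact+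
  moreover have "X = real n - real b + 1 \<longleftrightarrow> real (q ^ r) = real N"
    unfolding X_q N_real of_nat_power by (rule burst_bound_iff(2)) fact+
  ultimately have X_le: "X \<le> real n - real b + 1 \<longleftrightarrow> q ^ r \<le> N"
    and X_eq: "X = real n - real b + 1 \<longleftrightarrow> q ^ r = N"
    by (simp_all only: of_nat_le_iff of_nat_eq_iff)
  show ?thesis
  proof
    show "real n \<ge> X + real b - 1" using X_le count(2) by linarith
    have "real n = X + real b - 1 \<longleftrightarrow> X = real n - real b + 1" by linarith
    also have "\<dots> \<longleftrightarrow> q ^ r = N" by (rule X_eq)
    finally show "real n = X + real b - 1 \<longleftrightarrow> (\<forall>z. is_vec r z \<and> z \<noteq> (\<lambda>_. 0) \<longrightarrow>
                 (\<exists>!c. c \<noteq> (\<lambda>_. 0) \<and> lin_burst n b c \<and> matvec r n H c = z))"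
      unfolding count(3) .
  qed
qed

theorem theorem7:
  fixes H :: "nat \<Rightarrow> nat \<Rightarrow> 'a::{finite,field}"
    and n r b :: nat
  assumes "r \<ge> 1" and "b \<ge> 2"
    and "full_rank r n H"
  shows "(cyc_burst_covering r n b H \<longrightarrow>
            real n \<ge> (real (card (UNIV :: 'a set)) powi (int r - int b + 1) - 1) / (real (card (UNIV :: 'a set)) - 1) + 1)
       \<and> (lin_burst_covering r n b H \<longrightarrow>
            (real n \<ge> (real (card (UNIV :: 'a set)) powi (int r - int b + 1) - 1) / (real (card (UNIV :: 'a set)) - 1) + real b - 1
             \<and> (real n = (real (card (UNIV :: 'a set)) powi (int r - int b + 1) - 1) / (real (card (UNIV :: 'a set)) - 1) + real b - 1
                 \<longleftrightarrow> (\<forall>z. is_vec r z \<and> z \<noteq> (\<lambda>_. 0) \<longrightarrow>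
                        (\<exists>!c. c \<noteq> (\<lambda>_. 0) \<and> lin_burst n b c \<and> matvec r n H c = z)))))"
  by (rule conjI[OF impI impI])
    (erule cyc_burst_covering_length_bound[OF assms(2)],
     erule lin_burst_covering_length_bound[OF assms(1,2)])

end
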